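(* Let $\mathcal{A}$ be an irreducible $n\times n$ znz-pattern with digraph $D(\mathcal{A})$, and let $\mathbb{F}=\mathbb{Z}_2$. (a) If $D(\mathcal{A})$ has an odd number of loops, then $\mathcal{A}$ is not potentially nilpotent over $\mathbb{Z}_2$. (b) If $D(\mathcal{A})$ has exactly two loops and exactly two $2$-cycles, then $\mathcal{A}$ is not potentially nilpotent over $\mathbb{Z}_2$.
   Context: A znz-pattern is a square matrix with entries in $\{*,0\}$; a realization over $\mathbb{F}$ is a matrix over $\mathbb{F}$ with nonzero entries exactly at the $*$ positions; potentially nilpotent over $\mathbb{F}$ means some realization is nilpotent. $D(\mathcal{A})$ has vertex set $\{1,\ldots,n\}$ and an arc $(i,j)$ when $\mathcal{A}_{i,j}=*$; loops are arcs $(i,i)$, and a $2$-cycle is a pair of distinct vertices $i,j$ with both arcs $(i,j)$ and $(j,i)$. Irreducible means $D(\mathcal{A})$ is strongly connected. *)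

theory Defs
  imports "HOL-Library.Z2" "Jordan_Normal_Form.Matrix"
begin

text \<open>An n x n znz-pattern is represented by a predicate P :: nat => nat => bool;
  P i j means entry (i,j) is a star (indices 0..n-1). Entries outside the
  index range are irrelevant.\<close>

definition realization :: "nat \<Rightarrow> (nat \<Rightarrow> nat \<Rightarrow> bool) \<Rightarrow> 'a::field mat \<Rightarrow> bool" where
  "realization n P M \<longleftrightarrow> M \<in> carrier_mat n n \<and>
     (\<forall>i<n. \<forall>j<n. (M $$ (i,j) \<noteq> 0 \<longleftrightarrow> P i j))"

definition potentially_nilpotent :: "'a::field itself \<Rightarrow> nat \<Rightarrow> (nat \<Rightarrow> nat \<Rightarrow> bool) \<Rightarrow> bool" where
  "potentially_nilpotent F n P \<longleftrightarrow>
     (\<exists>M :: 'a mat. realization n P M \<and> (\<exists>k. M ^\<^sub>m k = 0\<^sub>m n n))"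

definition arcs :: "nat \<Rightarrow> (nat \<Rightarrow> nat \<Rightarrow> bool) \<Rightarrow> (nat \<times> nat) set" where
  "arcs n P = {(i,j). i < n \<and> j < n \<and> P i j}"

definition irreducible_pattern :: "nat \<Rightarrow> (nat \<Rightarrow> nat \<Rightarrow> bool) \<Rightarrow> bool" where
  "irreducible_pattern n P \<longleftrightarrow> (\<forall>i<n. \<forall>j<n. (i,j) \<in> (arcs n P)\<^sup>*)"

definition num_loops :: "nat \<Rightarrow> (nat \<Rightarrow> nat \<Rightarrow> bool) \<Rightarrow> nat" where
  "num_loops n P = card {i. i < n \<and> P i i}"

definition num_2cycles :: "nat \<Rightarrow> (nat \<Rightarrow> nat \<Rightarrow> bool) \<Rightarrow> nat" where
  "num_2cycles n P = card {{i,j} | i j. i < n \<and> j < n \<and> i \<noteq> j \<and> P i j \<and> P j i}"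

end

theory Submission
  imports Defs
begin

(* Over Z_2 the only realization of a pattern is its 0/1 matrix M.  Its
   diagonal records the loops of the digraph, and its principal 2x2 minors
   m_ii m_jj - m_ij m_ji record pairs of loops and 2-cycles.  Two facts about
   nilpotent matrices over Z_2 then conclude:
     (1) tr M = 0, because tr (B^2) = tr B over Z_2, so tr M = tr (M^(2^k)) = 0;
     (2) the sum E_2(M) of the principal 2x2 minors is 0, because E_2(M) is the trace of
         the second compound matrix C_2(M), and C_2(M^k) = C_2(M)^k (Cauchy-Binet),
         so C_2(M) is nilpotent as well and (1) applies to it.
   Hence #loops = 0 and (#loops choose 2) + #2-cycles = 0 modulo 2, which excludes both
   cases of the theorem. *)

(* The simp rules of Z2 turn + and * on bit into xor/and; we prefer ring reasoning. *)
declare add_bit_eq_xor[simp del] mult_bit_eq_and[simp del]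


section \<open>Matrices as functions on a finite index set\<close>

definition mmul :: "'i set \<Rightarrow> ('i \<Rightarrow> 'i \<Rightarrow> 'a::comm_semiring_1) \<Rightarrow> ('i \<Rightarrow> 'i \<Rightarrow> 'a) \<Rightarrow> 'i \<Rightarrow> 'i \<Rightarrow> 'a"
  where "mmul I A B = (\<lambda>i j. \<Sum>k\<in>I. A i k * B k j)"

fun mpow :: "'i set \<Rightarrow> ('i \<Rightarrow> 'i \<Rightarrow> 'a::comm_semiring_1) \<Rightarrow> nat \<Rightarrow> 'i \<Rightarrow> 'i \<Rightarrow> 'a" where
  "mpow I A 0 = (\<lambda>i j. of_bool (i = j))"
| "mpow I A (Suc k) = mmul I (mpow I A k) A"

definition mtr :: "'i set \<Rightarrow> ('i \<Rightarrow> 'i \<Rightarrow> 'a::comm_semiring_1) \<Rightarrow> 'a"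
  where "mtr I A = (\<Sum>i\<in>I. A i i)"

definition zero_on :: "'i set \<Rightarrow> ('i \<Rightarrow> 'i \<Rightarrow> 'a::zero) \<Rightarrow> bool"
  where "zero_on I A \<longleftrightarrow> (\<forall>i\<in>I. \<forall>j\<in>I. A i j = 0)"

lemma mmul_assoc:
  assumes "finite I"
  shows "mmul I (mmul I A B) C = mmul I A (mmul I B C)"
proof (intro ext)
  fix i j
  have "mmul I (mmul I A B) C i j = (\<Sum>k\<in>I. \<Sum>l\<in>I. A i l * B l k * C k j)"
    by (simp add: mmul_def sum_distrib_right)
  also have "\<dots> = (\<Sum>l\<in>I. \<Sum>k\<in>I. A i l * B l k * C k j)"
    by (rule sum.swap)
  also have "\<dots> = mmul I A (mmul I B C) i j"
    by (simp add: mmul_def sum_distrib_left mult.assoc)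
  finally show "mmul I (mmul I A B) C i j = mmul I A (mmul I B C) i j" .
qed

lemma mmul_mpow_0_right:
  assumes "finite I" "j \<in> I"
  shows "mmul I A (mpow I B 0) i j = A i j"
  using assms by (simp add: mmul_def)

lemma mpow_add:
  assumes "finite I" "i \<in> I" "j \<in> I"
  shows "mpow I A (a + b) i j = mmul I (mpow I A a) (mpow I A b) i j"
  using assms(3)
proof (induction b arbitrary: j)
  case 0
  then show ?case
    using mmul_mpow_0_right[OF assms(1) 0, of "mpow I A a" A i] by (simp del: mpow.simps)
next
  case (Suc b)
  have "mpow I A (a + Suc b) i j = mmul I (mpow I A (a + b)) A i j"
    by simp
  also have "\<dots> = mmul I (mmul I (mpow I A a) (mpow I A b)) A i j"
    using Suc.IH by (simp add: mmul_def)
  also have "\<dots> = mmul I (mpow I A a) (mpow I A (Suc b)) i j"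
    by (simp add: mmul_assoc[OF assms(1)])
  finally show ?case .
qed

lemma mpow_cong:
  assumes "\<And>i j. i \<in> I \<Longrightarrow> j \<in> I \<Longrightarrow> A i j = B i j" "j \<in> I"
  shows "mpow I A k i j = mpow I B k i j"
  using assms(2)
proof (induction k arbitrary: j)
  case (Suc k)
  then show ?case by (simp add: mmul_def assms(1))
qed simp

lemma zero_on_mpow_mono:
  assumes "finite I" "zero_on I (mpow I A k)" "k \<le> m"
  shows "zero_on I (mpow I A m)"
  unfolding zero_on_def
proof (intro ballI)
  fix i j assume ij: "i \<in> I" "j \<in> I"
  obtain d where m: "m = k + d" using assms(3) le_Suc_ex by blast
  have "mpow I A m i j = (\<Sum>l\<in>I. mpow I A k i l * mpow I A d l j)"
    using mpow_add[OF assms(1) ij] m by (simp add: mmul_def)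
  also have "\<dots> = 0" using assms(2) ij by (simp add: zero_on_def)
  finally show "mpow I A m i j = 0" .
qed


section \<open>Nilpotent matrices over Z_2 have trace zero\<close>

lemma bit_add_self: "(x::bit) + x = 0"
  by (cases x) simp_all

lemma bit_mult_self: "(x::bit) * x = x"
  by (cases x) simp_all

lemma of_nat_bit: "(of_nat m :: bit) = of_bool (odd m)"
  by (induction m) (auto simp: bit_add_self)

text \<open>Over Z_2 the off-diagonal terms of a symmetric double sum cancel in pairs.\<close>
lemma sum_symmetric_bit:
  assumes "finite I" "\<And>i k. f i k = f k i"
  shows "(\<Sum>i\<in>I. \<Sum>k\<in>I. (f i k :: bit)) = (\<Sum>i\<in>I. f i i)"
  using assms(1)
proof (induction I rule: finite_induct)
  case empty
  then show ?case by simp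
next
  case (insert a I)
  have "(\<Sum>i\<in>insert a I. \<Sum>k\<in>insert a I. f i k)
     = f a a + (\<Sum>i\<in>I. \<Sum>k\<in>I. f i k) + ((\<Sum>k\<in>I. f a k) + (\<Sum>k\<in>I. f a k))"
    using insert assms(2) by (simp add: sum.distrib ac_simps)
  then show ?case
    using insert by (simp add: bit_add_self)
qed

text \<open>The Frobenius identity for traces over Z_2: tr (A^2) = (tr A)^2 = tr A.\<close>
lemma mtr_square_bit:
  assumes "finite I"
  shows "mtr I (mmul I A A) = (mtr I A :: bit)"
proof -
  have "mtr I (mmul I A A) = (\<Sum>i\<in>I. \<Sum>k\<in>I. A i k * A k i)"
    by (simp add: mtr_def mmul_def)
  also have "\<dots> = (\<Sum>i\<in>I. A i i * A i i)"
    by (rule sum_symmetric_bit[OF assms]) (simp add: mult.commute)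
  also have "\<dots> = (\<Sum>i\<in>I. \<Sum>k\<in>I. A i i * A k k)"
    by (rule sum_symmetric_bit[OF assms, symmetric]) (simp add: mult.commute)
  also have "\<dots> = mtr I A * mtr I A"
    by (simp add: mtr_def sum_product)
  finally show ?thesis by (simp add: bit_mult_self)
qed

lemma mtr_mpow_2_power_bit:
  assumes "finite I"
  shows "mtr I (mpow I A (2^m)) = (mtr I A :: bit)"
proof (induction m)
  case 0
  show ?case unfolding mtr_def by (intro sum.cong refl) (simp add: mmul_def assms)
next
  case (Suc m)
  have "mtr I (mpow I A (2^Suc m)) = mtr I (mmul I (mpow I A (2^m)) (mpow I A (2^m)))"
    unfolding mtr_def by (intro sum.cong refl) (simp add: mpow_add[OF assms, symmetric] mult_2)
  then show ?case
    using Suc mtr_square_bit[OF assms] by simp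
qed

text \<open>Fact (1): if A^k = 0 then tr A = tr (A^(2^k)) = 0.\<close>
theorem nilpotent_trace_bit:
  assumes "finite I" "zero_on I (mpow I A k)"
  shows "mtr I A = (0::bit)"
proof -
  have "zero_on I (mpow I A (2^k))"
    using zero_on_mpow_mono[OF assms] less_exp[of k] by simp
  then have "mtr I (mpow I A (2^k)) = 0"
    by (simp add: zero_on_def mtr_def)
  then show ?thesis using mtr_mpow_2_power_bit[OF assms(1)] by simp
qed


section \<open>The second compound matrix\<close>

definition pairs :: "'i::linorder set \<Rightarrow> ('i \<times> 'i) set"
  where "pairs I = {(i,j). i \<in> I \<and> j \<in> I \<and> i < j}"

definition compound2 :: "('i \<Rightarrow> 'i \<Rightarrow> 'a::comm_ring_1) \<Rightarrow> ('i \<times> 'i) \<Rightarrow> ('i \<times> 'i) \<Rightarrow> 'a"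
  where "compound2 A = (\<lambda>(i,j) (k,l). A i k * A j l - A i l * A j k)"

lemma finite_pairs: "finite I \<Longrightarrow> finite (pairs I)"
  by (rule finite_subset[of _ "I \<times> I"]) (auto simp: pairs_def)

lemma sum_square_split:
  fixes I :: "'i::linorder set"
  assumes "finite I"
  shows "(\<Sum>k\<in>I. \<Sum>l\<in>I. h k l) = (\<Sum>(k,l)\<in>pairs I. h k l + h l k) + (\<Sum>k\<in>I. (h k k :: 'a::comm_monoid_add))"
proof -
  let ?S = "pairs I" and ?T = "(\<lambda>(k,l). (l,k)) ` pairs I" and ?D = "(\<lambda>k. (k,k)) ` I"
  have fin: "finite ?S" "finite ?T" "finite ?D" using finite_pairs[OF assms] assms by auto
  have split: "I \<times> I = ?S \<union> ?T \<union> ?D" by (auto simp: pairs_def image_iff)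
  have disj: "?S \<inter> ?T = {}" "(?S \<union> ?T) \<inter> ?D = {}" by (auto simp: pairs_def)
  have "(\<Sum>k\<in>I. \<Sum>l\<in>I. h k l) = (\<Sum>(k,l)\<in>I \<times> I. h k l)"
    by (rule sum.cartesian_product)
  also have "\<dots> = (\<Sum>(k,l)\<in>?S. h k l) + (\<Sum>(k,l)\<in>?T. h k l) + (\<Sum>(k,l)\<in>?D. h k l)"
    unfolding split using fin disj by (simp add: sum.union_disjoint)
  also have "(\<Sum>(k,l)\<in>?T. h k l) = (\<Sum>(k,l)\<in>?S. h l k)"
    by (subst sum.reindex) (auto simp: inj_on_def case_prod_beta)
  also have "(\<Sum>(k,l)\<in>?D. h k l) = (\<Sum>k\<in>I. h k k)"
    by (subst sum.reindex) (auto simp: inj_on_def)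
  finally show ?thesis by (simp add: sum.distrib case_prod_beta)
qed

text \<open>Cauchy-Binet for 2x2 minors: the second compound is multiplicative.\<close>
lemma compound2_mmul:
  fixes I :: "'i::linorder set" and A B :: "'i \<Rightarrow> 'i \<Rightarrow> 'a::comm_ring_1"
  assumes "finite I"
  shows "mmul (pairs I) (compound2 A) (compound2 B) p q = compound2 (mmul I A B) p q"
proof -
  obtain i j r s where pq: "p = (i,j)" "q = (r,s)" by fastforce
  define D where "D k l = B k r * B l s - B k s * B l r" for k l
  have "compound2 (mmul I A B) p q
     = (\<Sum>k\<in>I. A i k * B k r) * (\<Sum>l\<in>I. A j l * B l s) - (\<Sum>k\<in>I. A i k * B k s) * (\<Sum>l\<in>I. A j l * B l r)"
    by (simp add: compound2_def mmul_def pq)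
  also have "\<dots> = (\<Sum>k\<in>I. \<Sum>l\<in>I. A i k * A j l * D k l)"
    by (simp add: sum_product D_def sum_subtractf[symmetric] algebra_simps)
  also have "\<dots> = (\<Sum>(k,l)\<in>pairs I. A i k * A j l * D k l + A i l * A j k * D l k)
                  + (\<Sum>k\<in>I. A i k * A j k * D k k)"
    by (rule sum_square_split[OF assms])
  also have "(\<Sum>k\<in>I. A i k * A j k * D k k) = 0"
    by (simp add: D_def mult.commute)
  also have "(\<Sum>(k,l)\<in>pairs I. A i k * A j l * D k l + A i l * A j k * D l k)
     = (\<Sum>(k,l)\<in>pairs I. compound2 A (i,j) (k,l) * compound2 B (k,l) (r,s))"
    by (intro sum.cong refl) (auto simp: compound2_def D_def algebra_simps)
  finally show ?thesis by (simp add: mmul_def pq case_prod_beta)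
qed

lemma compound2_mpow:
  fixes I :: "'i::linorder set" and A :: "'i \<Rightarrow> 'i \<Rightarrow> 'a::comm_ring_1"
  assumes "finite I" "p \<in> pairs I" "q \<in> pairs I"
  shows "mpow (pairs I) (compound2 A) k p q = compound2 (mpow I A k) p q"
  using assms(3)
proof (induction k arbitrary: q)
  case 0
  show ?case using assms(2) 0 by (auto simp: pairs_def compound2_def of_bool_def split: if_splits)
next
  case (Suc k)
  have "mpow (pairs I) (compound2 A) (Suc k) p q
      = mmul (pairs I) (compound2 (mpow I A k)) (compound2 A) p q"
    using Suc.IH by (simp add: mmul_def)
  then show ?case by (simp add: compound2_mmul[OF assms(1)])
qed

theorem nilpotent_compound2_trace_bit:
  fixes I :: "'i::linorder set" and A :: "'i \<Rightarrow> 'i \<Rightarrow> bit"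
  assumes "finite I" "zero_on I (mpow I A k)"
  shows "mtr (pairs I) (compound2 A) = 0"
proof (rule nilpotent_trace_bit[OF finite_pairs[OF assms(1)]])
  have "compound2 (mpow I A k) p q = 0" if "p \<in> pairs I" "q \<in> pairs I" for p q
    using assms(2) that by (auto simp: zero_on_def pairs_def compound2_def)
  then show "zero_on (pairs I) (mpow (pairs I) (compound2 A) k)"
    by (simp add: zero_on_def compound2_mpow[OF assms(1)])
qed


section \<open>Potentially nilpotent patterns over Z_2\<close>

text \<open>The 0/1 matrix of a pattern; over Z_2 it is the only realization.\<close>
definition pattern_matrix :: "(nat \<Rightarrow> nat \<Rightarrow> bool) \<Rightarrow> nat \<Rightarrow> nat \<Rightarrow> bit"
  where "pattern_matrix P = (\<lambda>i j. of_bool (P i j))"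

lemma mat_pow_entries:
  assumes "M \<in> carrier_mat n n" "i < n" "j < n"
  shows "(M ^\<^sub>m k) $$ (i,j) = mpow {..<n} (\<lambda>a b. M $$ (a,b)) k i j"
  using assms(3)
proof (induction k arbitrary: j)
  case 0
  then show ?case using assms(1,2) by simp
next
  case (Suc k)
  have "(M ^\<^sub>m Suc k) $$ (i,j) = (\<Sum>l\<in>{0..<n}. (M ^\<^sub>m k) $$ (i,l) * M $$ (l,j))"
    using Suc.prems assms by (simp add: scalar_prod_def)
  also have "\<dots> = (\<Sum>l\<in>{..<n}. mpow {..<n} (\<lambda>a b. M $$ (a,b)) k i l * M $$ (l,j))"
    using Suc.IH by (intro sum.cong) auto
  finally show ?case by (simp add: mmul_def)
qed

lemma realization_bit_entries:
  assumes "realization n P (M :: bit mat)" "i < n" "j < n"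
  shows "M $$ (i,j) = pattern_matrix P i j"
proof -
  have "M $$ (i,j) \<noteq> 0 \<longleftrightarrow> P i j"
    using assms unfolding realization_def by blast
  then show ?thesis by (auto simp: pattern_matrix_def)
qed

lemma potentially_nilpotent_bit:
  assumes "potentially_nilpotent TYPE(bit) n P"
  obtains k where "zero_on {..<n} (mpow {..<n} (pattern_matrix P) k)"
proof -
  obtain M :: "bit mat" and k where M: "realization n P M" "M ^\<^sub>m k = 0\<^sub>m n n"
    using assms unfolding potentially_nilpotent_def by blast
  have car: "M \<in> carrier_mat n n" using M(1) by (simp add: realization_def)
  have "zero_on {..<n} (mpow {..<n} (\<lambda>a b. M $$ (a,b)) k)"
    using M(2) by (auto simp: zero_on_def mat_pow_entries[OF car, symmetric])
  moreover have "mpow {..<n} (\<lambda>a b. M $$ (a,b)) k i j = mpow {..<n} (pattern_matrix P) k i j"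
    if "i < n" "j < n" for i j
    using mpow_cong[of "{..<n}" "\<lambda>a b. M $$ (a,b)" "pattern_matrix P"] that
    by (simp add: realization_bit_entries[OF M(1)])
  ultimately show ?thesis using that by (auto simp: zero_on_def)
qed


section \<open>Counting loops and 2-cycles\<close>

lemma card_pairs_symmetric:
  fixes I :: "'i::linorder set"
  assumes "\<And>i j. R i j \<longleftrightarrow> R j i"
  shows "card (pairs I \<inter> {(i,j). R i j})
       = card {{i,j} | i j. i \<in> I \<and> j \<in> I \<and> i \<noteq> j \<and> R i j}"
proof -
  let ?f = "\<lambda>(i,j). {i,j}" and ?S = "pairs I \<inter> {(i,j). R i j}"
  have inj: "inj_on ?f ?S"
    by (auto simp: inj_on_def pairs_def doubleton_eq_iff)
  have img: "?f ` ?S = {{i,j} | i j. i \<in> I \<and> j \<in> I \<and> i \<noteq> j \<and> R i j}"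
  proof (intro equalityI subsetI)
    fix x assume "x \<in> {{i,j} | i j. i \<in> I \<and> j \<in> I \<and> i \<noteq> j \<and> R i j}"
    then obtain i j where x: "x = {i,j}" "i \<in> I" "j \<in> I" "i \<noteq> j" "R i j" by blast
    show "x \<in> ?f ` ?S"
    proof (cases "i < j")
      case True
      then have "(i,j) \<in> ?S" using x by (simp add: pairs_def)
      then show ?thesis using x(1) by force
    next
      case False
      then have "(j,i) \<in> ?S" using x assms[of i j] by (simp add: pairs_def)
      moreover have "x = {j,i}" using x(1) by blast
      ultimately show ?thesis by force
    qed
  next
    fix x assume "x \<in> ?f ` ?S"
    then obtain i j where "(i,j) \<in> ?S" "x = {i,j}" by blast
    then have "x = {i,j} \<and> i \<in> I \<and> j \<in> I \<and> i \<noteq> j \<and> R i j"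
      by (auto simp: pairs_def)
    then show "x \<in> {{i,j} | i j. i \<in> I \<and> j \<in> I \<and> i \<noteq> j \<and> R i j}"
      by blast
  qed
  show ?thesis using card_image[OF inj] unfolding img by (rule sym)
qed

lemma card_pairs:
  fixes L :: "'i::linorder set"
  assumes "finite L"
  shows "card (pairs L) = card L choose 2"
proof -
  have "{{i,j} | i j. i \<in> L \<and> j \<in> L \<and> i \<noteq> j \<and> True} = {B. B \<subseteq> L \<and> card B = 2}"
    by (auto simp: card_2_iff)
  then show ?thesis
    using card_pairs_symmetric[of "\<lambda>_ _. True" L] n_subsets[OF assms, of 2] by simp
qed

lemma mtr_pattern_matrix:
  "mtr {..<n} (pattern_matrix P) = of_nat (num_loops n P)"
proof -
  have "{..<n} \<inter> {i. P i i} = {i. i < n \<and> P i i}" by auto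
  then show ?thesis by (simp add: mtr_def pattern_matrix_def num_loops_def)
qed

lemma mtr_compound2_pattern_matrix:
  "mtr (pairs {..<n}) (compound2 (pattern_matrix P))
     = of_nat (num_loops n P choose 2) + of_nat (num_2cycles n P)"
proof -
  have fin: "finite (pairs {..<n})" by (simp add: finite_pairs)
  have "mtr (pairs {..<n}) (compound2 (pattern_matrix P))
      = (\<Sum>p\<in>pairs {..<n}. of_bool (p \<in> {(i,j). P i i \<and> P j j})
                              + of_bool (p \<in> {(i,j). P i j \<and> P j i}))"
    unfolding mtr_def by (intro sum.cong refl) (auto simp: compound2_def pattern_matrix_def)
  also have "\<dots> = of_nat (card (pairs {..<n} \<inter> {(i,j). P i i \<and> P j j}))
                 + of_nat (card (pairs {..<n} \<inter> {(i,j). P i j \<and> P j i}))"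
    using fin by (simp only: sum.distrib) simp
  also have "pairs {..<n} \<inter> {(i,j). P i i \<and> P j j} = pairs {i. i < n \<and> P i i}"
    by (auto simp: pairs_def)
  also have "card (pairs {..<n} \<inter> {(i,j). P i j \<and> P j i}) = num_2cycles n P"
    unfolding num_2cycles_def by (subst card_pairs_symmetric) auto
  finally show ?thesis by (simp add: card_pairs num_loops_def)
qed

theorem potentially_nilpotent_bit_parities:
  assumes "potentially_nilpotent TYPE(bit) n P"
  shows "even (num_loops n P)" and "even ((num_loops n P choose 2) + num_2cycles n P)"
proof -
  obtain k where nil: "zero_on {..<n} (mpow {..<n} (pattern_matrix P) k)"
    using potentially_nilpotent_bit[OF assms] by blast
  have "(of_nat (num_loops n P) :: bit) = 0"
    using nilpotent_trace_bit[OF _ nil] by (simp add: mtr_pattern_matrix)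
  then show "even (num_loops n P)" by (simp add: of_nat_bit)
  have "(of_nat ((num_loops n P choose 2) + num_2cycles n P) :: bit) = 0"
    using nilpotent_compound2_trace_bit[OF _ nil] by (simp add: mtr_compound2_pattern_matrix)
  then show "even ((num_loops n P choose 2) + num_2cycles n P)" by (simp add: of_nat_bit)
qed

text \<open>Case (a) violates the first parity condition; in case (b) the second sum is
  (2 choose 2) + 2 = 3.\<close>
theorem lemma5p2:
  fixes n :: nat and P :: "nat \<Rightarrow> nat \<Rightarrow> bool"
  assumes "irreducible_pattern n P"
  shows "(odd (num_loops n P) \<longrightarrow> \<not> potentially_nilpotent TYPE(bit) n P)
       \<and> (num_loops n P = 2 \<and> num_2cycles n P = 2 \<longrightarrow> \<not> potentially_nilpotent TYPE(bit) n P)"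
proof (intro conjI impI notI)
  assume "odd (num_loops n P)" and "potentially_nilpotent TYPE(bit) n P"
  then show False using potentially_nilpotent_bit_parities(1) by blast
next
  assume "num_loops n P = 2 \<and> num_2cycles n P = 2" and "potentially_nilpotent TYPE(bit) n P"
  then show False using potentially_nilpotent_bit_parities(2)[of n P] by simp
qed

end
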